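(* Let $(\Xi,d_\Xi)$ be a metric space, let $\{P^\nu\}_{\nu\in\mathbb{N}}$ be probabilities on $(\Xi,\mathcal{B}(\Xi))$ converging weakly to a probability $P$, and let $\{h^\nu\}_{\nu\in\mathbb{N}}$ be measurable $\overline{\mathbb{R}}$-valued functions on $\Xi$ such that $$\liminf_{K\to+\infty}\ \liminf_{\nu\to+\infty}\mathbb{E}^{P^\nu}\big[h^\nu(\xi)\,\mathbb{1}\{\xi:h^\nu(\xi)\le -K\}\big]=0.$$ Then either $\liminf_{\nu\to+\infty}\mathbb{E}^{P^\nu}[h^\nu(\xi)]=+\infty$ or $$\mathbb{E}^{P}\Big[\Big(\liminf_{(\nu,\zeta)\to(+\infty,\xi)}h^\nu(\zeta)\Big)_+\Big]<+\infty.$$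
   Context: $\overline{\mathbb{R}}=\mathbb{R}\cup\{-\infty,+\infty\}$; $a_+=\max\{a,0\}$, $a_-=-\min\{a,0\}$. Weak convergence means $\int\varphi\,dP^\nu\to\int\varphi\,dP$ for all bounded continuous $\varphi$. For a probability $\mu$ and measurable $\overline{\mathbb{R}}$-valued $g$, $\mathbb{E}^\mu[g]:=\int g_+\,d\mu-\int g_-\,d\mu$ with conventions $+\infty-\alpha=+\infty$ for all $\alpha\in\overline{\mathbb{R}}$ and $\beta-(+\infty)=-\infty$ for $\beta\in\mathbb{R}$. $\mathbb{1}\{B\}$ is the indicator of $B$. $\liminf_{(\nu,\zeta)\to(+\infty,\xi)}h^\nu(\zeta):=\lim_{\delta\downarrow0}\lim_{N\to\infty}\inf\{h^\nu(\zeta):\nu\ge N,\ d_\Xi(\zeta,\xi)<\delta\}$. *)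

theory Defs
  imports "HOL-Probability.Probability"
begin

text \<open>Extended expectation: E^mu[g] = int g_+ dmu - int g_- dmu, with
  +inf - a = +inf and b - (+inf) = -inf for finite b.  Note e2ennreal (g x) = g_+(x).\<close>
definition ext_expect :: "'a measure \<Rightarrow> ('a \<Rightarrow> ereal) \<Rightarrow> ereal" where
  "ext_expect \<mu> g =
     (let a = enn2ereal (\<integral>\<^sup>+ x. e2ennreal (g x) \<partial>\<mu>);
          b = enn2ereal (\<integral>\<^sup>+ x. e2ennreal (- g x) \<partial>\<mu>)
      in if a = \<infinity> then \<infinity> else a - b)"

definition weak_conv_metric :: "(nat \<Rightarrow> 'a::metric_space measure) \<Rightarrow> 'a measure \<Rightarrow> bool" where
  "weak_conv_metric Pn P \<longleftrightarrow>
     (\<forall>\<phi> :: 'a \<Rightarrow> real. continuous_on UNIV \<phi> \<and> bounded (range \<phi>) \<longrightarrow>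
        (\<lambda>n. integral\<^sup>L (Pn n) \<phi>) \<longlonglongrightarrow> integral\<^sup>L P \<phi>)"

text \<open>liminf_{(nu,zeta) -> (+inf, xi)} h^nu(zeta)
  = lim_{delta down 0} lim_{N->inf} inf { h^nu(zeta) : nu >= N, d(zeta,xi) < delta }.\<close>
definition epi_liminf :: "(nat \<Rightarrow> 'a::metric_space \<Rightarrow> ereal) \<Rightarrow> 'a \<Rightarrow> ereal" where
  "epi_liminf h \<xi> =
     Lim (at_right (0::real))
       (\<lambda>\<delta>. lim (\<lambda>N. Inf {h \<nu> \<zeta> | \<nu> \<zeta>. \<nu> \<ge> N \<and> dist \<zeta> \<xi> < \<delta>}))"

end

(*
  For k = 1, 2, ... let F_k be the k-Lipschitz inf-convolution of
  zeta |-> inf_{nu >= k} min ((h nu zeta)_+, k). Each F_k is bounded, continuous and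
  below (h nu)_+ for nu >= k, so weak convergence gives
  E^P[F_k] <= liminf_nu E^{P nu}[(h nu)_+]; moreover (epi_liminf h)_+ <= liminf_k F_k
  pointwise, and Fatou's lemma yields
  E^P[(epi_liminf h)_+] <= liminf_nu E^{P nu}[(h nu)_+].
  The uniform integrability hypothesis bounds the negative parts E^{P nu}[(h nu)_-]
  eventually, so the right-hand side is finite as soon as liminf_nu E^{P nu}[h nu] is.
*)

theory Submission
  imports Defs
begin

lemma frequently_le_imp_Liminf_le:
  fixes f :: "'a \<Rightarrow> 'b::complete_linorder"
  assumes "\<exists>\<^sub>F x in F. f x \<le> C"
  shows "Liminf F f \<le> C"
proof (rule ccontr)
  assume "\<not> Liminf F f \<le> C"
  then have "\<forall>\<^sub>F x in F. C < f x"
    by (intro less_LiminfD) simp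
  with assms show False
    by (simp add: frequently_def eventually_mono not_le)
qed

lemma Liminf_lessD:
  fixes f :: "'a \<Rightarrow> 'b::complete_linorder"
  assumes "Liminf F f < C"
  shows "\<exists>\<^sub>F x in F. f x < C"
proof (rule ccontr)
  assume "\<not> (\<exists>\<^sub>F x in F. f x < C)"
  then have "\<forall>\<^sub>F x in F. C \<le> f x"
    by (simp add: not_frequently not_less)
  then have "C \<le> Liminf F f"
    by (rule Liminf_bounded)
  with assms show False
    by simp
qed

lemma epi_liminf_eq_SUP:
  fixes h :: "nat \<Rightarrow> 'a::metric_space \<Rightarrow> ereal"
  shows "epi_liminf h \<xi> = (SUP \<delta>\<in>{0<..}. SUP N. Inf {h \<nu> \<zeta> | \<nu> \<zeta>. \<nu> \<ge> N \<and> dist \<zeta> \<xi> < \<delta>})"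
proof -
  define W where "W \<delta> N = Inf {h \<nu> \<zeta> | \<nu> \<zeta>. \<nu> \<ge> N \<and> dist \<zeta> \<xi> < \<delta>}" for \<delta> :: real and N
  define V where "V \<delta> = (SUP N. W \<delta> N)" for \<delta>
  have "incseq (W \<delta>)" for \<delta>
    unfolding incseq_def W_def by (force intro!: Inf_superset_mono)
  then have lim_W: "lim (W \<delta>) = V \<delta>" for \<delta>
    unfolding V_def by (intro limI LIMSEQ_SUP)
  have V_antimono: "V \<delta>' \<le> V \<delta>" if "\<delta> \<le> \<delta>'" for \<delta> \<delta>'
    unfolding V_def W_def using that by (force intro!: SUP_mono' Inf_superset_mono)
  have "(V \<longlongrightarrow> (SUP \<delta>\<in>{0<..}. V \<delta>)) (at_right 0)"
  proof (rule increasing_tendsto)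
    show "\<forall>\<^sub>F \<delta> in at_right 0. V \<delta> \<le> (SUP \<delta>\<in>{0<..}. V \<delta>)"
      using eventually_at_right_less[of "0::real"] by eventually_elim (simp add: SUP_upper)
  next
    fix y assume "y < (SUP \<delta>\<in>{0<..}. V \<delta>)"
    then obtain \<delta>\<^sub>0 where "0 < \<delta>\<^sub>0" "y < V \<delta>\<^sub>0" by (auto simp: less_SUP_iff)
    then show "\<forall>\<^sub>F \<delta> in at_right 0. y < V \<delta>"
      unfolding eventually_at_right_field using V_antimono by (meson less_le_trans less_imp_le)
  qed
  then have "Lim (at_right 0) V = (SUP \<delta>\<in>{0<..}. V \<delta>)"
    by (simp add: tendsto_Lim)
  moreover have "epi_liminf h \<xi> = Lim (at_right 0) V"
    unfolding epi_liminf_def W_def[symmetric] lim_W ..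
  ultimately show ?thesis
    by (simp add: V_def W_def)
qed

lemma less_epi_liminfD:
  fixes h :: "nat \<Rightarrow> 'a::metric_space \<Rightarrow> ereal"
  assumes "a < epi_liminf h \<xi>"
  shows "\<exists>\<delta>>0. \<exists>N. \<forall>\<nu>\<ge>N. \<forall>\<zeta>. dist \<zeta> \<xi> < \<delta> \<longrightarrow> a < h \<nu> \<zeta>"
proof -
  obtain \<delta> where "\<delta> > 0" and "a < (SUP N. Inf {h \<nu> \<zeta> | \<nu> \<zeta>. \<nu> \<ge> N \<and> dist \<zeta> \<xi> < \<delta>})"
    using assms unfolding epi_liminf_eq_SUP less_SUP_iff by blast
  then obtain N where a_less: "a < Inf {h \<nu> \<zeta> | \<nu> \<zeta>. \<nu> \<ge> N \<and> dist \<zeta> \<xi> < \<delta>}"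
    unfolding less_SUP_iff by blast
  have "a < h \<nu> \<zeta>" if "\<nu> \<ge> N" "dist \<zeta> \<xi> < \<delta>" for \<nu> \<zeta>
    using a_less by (rule less_le_trans) (use that in \<open>blast intro: Inf_lower\<close>)
  with \<open>\<delta> > 0\<close> show ?thesis by blast
qed

definition lipschitz_envelope :: "real \<Rightarrow> ('a::metric_space \<Rightarrow> real) \<Rightarrow> 'a \<Rightarrow> real" where
  "lipschitz_envelope L f x = (INF y. f y + L * dist y x)"

lemma bdd_below_range_plus_dist:
  assumes "bdd_below (range f)" "0 \<le> L"
  shows "bdd_below (range (\<lambda>y. f y + L * dist y x))"
proof -
  obtain m where "\<And>y. m \<le> f y"
    using assms(1) by (auto simp: bdd_below_def)
  then show ?thesis
    using assms(2) by (intro bdd_belowI2[of _ m]) (simp add: add_increasing2)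
qed

lemma lipschitz_envelope_le:
  assumes "bdd_below (range f)" "0 \<le> L"
  shows "lipschitz_envelope L f x \<le> f x"
proof -
  have "lipschitz_envelope L f x \<le> f x + L * dist x x"
    unfolding lipschitz_envelope_def by (rule cINF_lower[OF bdd_below_range_plus_dist[OF assms]]) simp
  then show ?thesis
    by simp
qed

lemma le_lipschitz_envelope:
  assumes "0 \<le> L"
    and near: "\<And>y. dist y x < \<delta> \<Longrightarrow> a \<le> f y"
    and far: "\<And>y. a \<le> f y + L * \<delta>"
  shows "a \<le> lipschitz_envelope L f x"
  unfolding lipschitz_envelope_def
proof (rule cINF_greatest)
  fix y
  show "a \<le> f y + L * dist y x"
  proof (cases "dist y x < \<delta>")
    case True
    then show ?thesis
      using near[of y] assms(1) by (simp add: add_increasing2)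
  next
    case False
    then have "L * \<delta> \<le> L * dist y x"
      using assms(1) by (intro mult_left_mono) simp_all
    then show ?thesis
      using far[of y] by linarith
  qed
qed simp

lemma lipschitz_on_lipschitz_envelope:
  assumes "bdd_below (range f)" "0 \<le> L"
  shows "L-lipschitz_on UNIV (lipschitz_envelope L f)"
proof -
  have envelope_le: "lipschitz_envelope L f x \<le> lipschitz_envelope L f x' + L * dist x x'" for x x'
  proof -
    have "lipschitz_envelope L f x - L * dist x x' \<le> f y + L * dist y x'" for y
    proof -
      have "lipschitz_envelope L f x \<le> f y + L * dist y x"
        unfolding lipschitz_envelope_def by (rule cINF_lower[OF bdd_below_range_plus_dist[OF assms]]) simp
      also have "\<dots> \<le> f y + L * (dist y x' + dist x x')"
        using assms(2) by (intro add_left_mono mult_left_mono) (auto simp: dist_triangle2)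
      finally show ?thesis
        by (simp add: algebra_simps)
    qed
    then have "lipschitz_envelope L f x - L * dist x x' \<le> lipschitz_envelope L f x'"
      unfolding lipschitz_envelope_def[of L f x'] by (intro cINF_greatest) simp_all
    then show ?thesis
      by simp
  qed
  show ?thesis
  proof (rule lipschitz_onI)
    fix x y :: 'a
    show "dist (lipschitz_envelope L f x) (lipschitz_envelope L f y) \<le> L * dist x y"
      using envelope_le[of x y] envelope_le[of y x] by (simp add: dist_real_def dist_commute abs_le_iff)
  qed fact
qed

lemma e2ennreal_max_0: "e2ennreal (max x 0) = e2ennreal x"
  by (simp add: e2ennreal_def max.commute)

definition pos_trunc :: "real \<Rightarrow> ereal \<Rightarrow> real" where
  "pos_trunc k x = real_of_ereal (min (max x 0) (ereal k))"

lemma ereal_pos_trunc: "ereal (pos_trunc k x) = min (max x 0) (ereal k)"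
  unfolding pos_trunc_def by (cases x) (auto simp: min_def max_def)

lemma pos_trunc_nonneg: "0 \<le> k \<Longrightarrow> 0 \<le> pos_trunc k x"
  using ereal_pos_trunc[of k x] by (metis ereal_less_eq(5) max.cobounded2 min.bounded_iff)

lemma pos_trunc_le: "pos_trunc k x \<le> k"
  using ereal_pos_trunc[of k x] by (metis ereal_less_eq(3) min.cobounded2)

lemma le_pos_trunc: "ereal a \<le> x \<Longrightarrow> a \<le> k \<Longrightarrow> a \<le> pos_trunc k x"
  using ereal_pos_trunc[of k x] by (metis ereal_less_eq(3) le_max_iff_disj min.boundedI)

lemma ennreal_pos_trunc_le: "ennreal (pos_trunc k x) \<le> e2ennreal x"
proof -
  have "ennreal (pos_trunc k x) = e2ennreal (min (max x 0) (ereal k))"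
    by (simp flip: ereal_pos_trunc)
  also have "\<dots> \<le> e2ennreal (max x 0)"
    by (intro e2ennreal_mono) simp
  also have "\<dots> = e2ennreal x"
    by (rule e2ennreal_max_0)
  finally show ?thesis .
qed

definition lipschitz_minorant :: "(nat \<Rightarrow> 'a::metric_space \<Rightarrow> ereal) \<Rightarrow> nat \<Rightarrow> 'a \<Rightarrow> real" where
  "lipschitz_minorant h k =
     lipschitz_envelope (real k) (\<lambda>\<zeta>. INF \<nu>\<in>{k..}. pos_trunc (real k) (h \<nu> \<zeta>))"

lemma INF_pos_trunc_nonneg: "0 \<le> (INF \<nu>\<in>{k..}. pos_trunc (real k) (h \<nu> \<zeta>))"
  by (intro cINF_greatest pos_trunc_nonneg) auto

lemma bdd_below_range_INF_pos_trunc: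
  "bdd_below (range (\<lambda>\<zeta>. INF \<nu>\<in>{k..}. pos_trunc (real k) (h \<nu> \<zeta>)))"
  by (intro bdd_belowI2[of _ 0] INF_pos_trunc_nonneg)

lemma lipschitz_minorant_nonneg: "0 \<le> lipschitz_minorant h k \<xi>"
  unfolding lipschitz_minorant_def by (rule le_lipschitz_envelope[where \<delta>=0]) (simp_all add: INF_pos_trunc_nonneg)

lemma lipschitz_minorant_le:
  assumes "k \<le> \<nu>"
  shows "lipschitz_minorant h k \<xi> \<le> pos_trunc (real k) (h \<nu> \<xi>)"
proof -
  have "lipschitz_minorant h k \<xi> \<le> (INF \<nu>\<in>{k..}. pos_trunc (real k) (h \<nu> \<xi>))"
    unfolding lipschitz_minorant_def by (rule lipschitz_envelope_le[OF bdd_below_range_INF_pos_trunc]) simp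
  also have "\<dots> \<le> pos_trunc (real k) (h \<nu> \<xi>)"
    using assms by (intro cINF_lower bdd_belowI2[of _ 0] pos_trunc_nonneg) auto
  finally show ?thesis .
qed

lemma continuous_on_lipschitz_minorant: "continuous_on UNIV (lipschitz_minorant h k)"
  unfolding lipschitz_minorant_def
  by (rule lipschitz_on_continuous_on[OF lipschitz_on_lipschitz_envelope[OF bdd_below_range_INF_pos_trunc]]) simp

lemma bounded_range_lipschitz_minorant: "bounded (range (lipschitz_minorant h k))"
  unfolding bounded_real
  using lipschitz_minorant_nonneg lipschitz_minorant_le[OF order_refl] pos_trunc_le
  by (metis abs_of_nonneg order_trans rangeE)

lemma le_lipschitz_minorant:
  assumes "a \<le> real k" "a \<le> real k * \<delta>"
    and near: "\<And>\<nu> \<zeta>. k \<le> \<nu> \<Longrightarrow> dist \<zeta> \<xi> < \<delta> \<Longrightarrow> ereal a \<le> h \<nu> \<zeta>"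
  shows "a \<le> lipschitz_minorant h k \<xi>"
  unfolding lipschitz_minorant_def
proof (rule le_lipschitz_envelope)
  fix \<zeta> assume "dist \<zeta> \<xi> < \<delta>"
  then show "a \<le> (INF \<nu>\<in>{k..}. pos_trunc (real k) (h \<nu> \<zeta>))"
    using near assms(1) by (intro cINF_greatest le_pos_trunc) auto
next
  fix \<zeta>
  show "a \<le> (INF \<nu>\<in>{k..}. pos_trunc (real k) (h \<nu> \<zeta>)) + real k * \<delta>"
    using assms(2) INF_pos_trunc_nonneg[of k h \<zeta>] by linarith
qed simp

lemma e2ennreal_epi_liminf_le_liminf_lipschitz_minorant:
  "e2ennreal (epi_liminf h \<xi>) \<le> liminf (\<lambda>k. ennreal (lipschitz_minorant h k \<xi>))"
  unfolding le_Liminf_iff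
proof (intro allI impI)
  fix y assume y: "y < e2ennreal (epi_liminf h \<xi>)"
  then obtain r where r: "0 \<le> r" "y = ennreal r"
    by (cases y) auto
  with y have "ereal r < epi_liminf h \<xi>"
    by (metis e2ennreal_enn2ereal enn2ereal_ennreal e2ennreal_mono not_le)
  then obtain a where "ereal r < ereal a" "ereal a < epi_liminf h \<xi>"
    using ereal_dense2 by blast
  then obtain \<delta> N where "\<delta> > 0" and near: "\<forall>\<nu>\<ge>N. \<forall>\<zeta>. dist \<zeta> \<xi> < \<delta> \<longrightarrow> ereal a < h \<nu> \<zeta>"
    using less_epi_liminfD by blast
  have "\<forall>\<^sub>F k in sequentially. max N (max (nat \<lceil>a\<rceil>) (nat \<lceil>a / \<delta>\<rceil>)) \<le> k"
    by (rule eventually_ge_at_top)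
  then show "\<forall>\<^sub>F k in sequentially. y < ennreal (lipschitz_minorant h k \<xi>)"
  proof (rule eventually_mono)
    fix k assume "max N (max (nat \<lceil>a\<rceil>) (nat \<lceil>a / \<delta>\<rceil>)) \<le> k"
    then have k: "N \<le> k" "a \<le> real k" "a / \<delta> \<le> real k"
      by linarith+
    have "a \<le> lipschitz_minorant h k \<xi>"
      using k near \<open>\<delta> > 0\<close> by (intro le_lipschitz_minorant) (auto simp: divide_le_eq mult.commute less_imp_le)
    then show "y < ennreal (lipschitz_minorant h k \<xi>)"
      using r \<open>ereal r < ereal a\<close> by (simp add: ennreal_less_iff)
  qed
qed

lemma (in finite_measure) nn_integral_eq_integral_bounded:
  fixes f :: "'a \<Rightarrow> real"
  assumes "f \<in> borel_measurable M" "bounded (range f)" "\<And>x. 0 \<le> f x"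
  shows "(\<integral>\<^sup>+ x. ennreal (f x) \<partial>M) = ennreal (integral\<^sup>L M f)"
proof -
  obtain B where "\<And>x. \<bar>f x\<bar> \<le> B"
    using assms(2) unfolding bounded_real by blast
  then have "integrable M f"
    using assms(1) by (intro integrable_const_bound[where B=B]) simp_all
  then show ?thesis
    using assms(3) by (simp add: nn_integral_eq_integral)
qed

lemma weak_conv_metric_nn_integral:
  fixes f :: "'a::metric_space \<Rightarrow> real"
  assumes weak: "weak_conv_metric Pn P"
    and Pn: "\<And>n. prob_space (Pn n)" "\<And>n. sets (Pn n) = sets borel"
    and P: "prob_space P" "sets P = sets borel"
    and f: "continuous_on UNIV f" "bounded (range f)" "\<And>x. 0 \<le> f x"
  shows "(\<lambda>n. \<integral>\<^sup>+ x. ennreal (f x) \<partial>Pn n) \<longlonglongrightarrow> (\<integral>\<^sup>+ x. ennreal (f x) \<partial>P)"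
proof -
  have nn_integral_eq: "(\<integral>\<^sup>+ x. ennreal (f x) \<partial>M) = ennreal (integral\<^sup>L M f)"
    if "prob_space M" "sets M = sets borel" for M
  proof -
    interpret prob_space M by (fact that(1))
    show ?thesis
      using f borel_measurable_continuous_onI[OF f(1)]
      by (intro nn_integral_eq_integral_bounded) (simp_all add: measurable_cong_sets[OF that(2) refl])
  qed
  have "(\<lambda>n. integral\<^sup>L (Pn n) f) \<longlonglongrightarrow> integral\<^sup>L P f"
    using weak f unfolding weak_conv_metric_def by blast
  then show ?thesis
    unfolding nn_integral_eq[OF Pn] nn_integral_eq[OF P] by (rule tendsto_ennrealI)
qed

theorem nn_integral_epi_liminf_le_liminf:
  fixes Pn :: "nat \<Rightarrow> 'a::metric_space measure" and h :: "nat \<Rightarrow> 'a \<Rightarrow> ereal"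
  assumes weak: "weak_conv_metric Pn P"
    and Pn: "\<And>n. prob_space (Pn n)" "\<And>n. sets (Pn n) = sets borel"
    and P: "prob_space P" "sets P = sets borel"
  shows "(\<integral>\<^sup>+ \<xi>. e2ennreal (epi_liminf h \<xi>) \<partial>P) \<le> liminf (\<lambda>\<nu>. \<integral>\<^sup>+ \<xi>. e2ennreal (h \<nu> \<xi>) \<partial>Pn \<nu>)"
    (is "_ \<le> ?rhs")
proof -
  let ?F = "\<lambda>k \<xi>. ennreal (lipschitz_minorant h k \<xi>)"
  have F_le: "(\<integral>\<^sup>+ \<xi>. ?F k \<xi> \<partial>P) \<le> ?rhs" for k
  proof -
    have "(\<lambda>\<nu>. \<integral>\<^sup>+ \<xi>. ?F k \<xi> \<partial>Pn \<nu>) \<longlonglongrightarrow> (\<integral>\<^sup>+ \<xi>. ?F k \<xi> \<partial>P)"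
      using weak Pn P continuous_on_lipschitz_minorant bounded_range_lipschitz_minorant lipschitz_minorant_nonneg
      by (rule weak_conv_metric_nn_integral)
    then have "(\<integral>\<^sup>+ \<xi>. ?F k \<xi> \<partial>P) = liminf (\<lambda>\<nu>. \<integral>\<^sup>+ \<xi>. ?F k \<xi> \<partial>Pn \<nu>)"
      by (simp add: lim_imp_Liminf)
    also have "\<dots> \<le> ?rhs"
    proof (intro Liminf_mono eventually_mono[OF eventually_ge_at_top[of k]] nn_integral_mono)
      fix \<nu> \<xi> assume "k \<le> \<nu>"
      then show "?F k \<xi> \<le> e2ennreal (h \<nu> \<xi>)"
        using lipschitz_minorant_le ennreal_pos_trunc_le by (meson ennreal_leI order_trans)
    qed
    finally show ?thesis .
  qed
  have F_measurable: "?F k \<in> borel_measurable P" for k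
    unfolding measurable_cong_sets[OF P(2) refl]
    using borel_measurable_continuous_onI[OF continuous_on_lipschitz_minorant] by measurable
  have "(\<integral>\<^sup>+ \<xi>. e2ennreal (epi_liminf h \<xi>) \<partial>P) \<le> (\<integral>\<^sup>+ \<xi>. liminf (\<lambda>k. ?F k \<xi>) \<partial>P)"
    by (intro nn_integral_mono e2ennreal_epi_liminf_le_liminf_lipschitz_minorant)
  also have "\<dots> \<le> liminf (\<lambda>k. \<integral>\<^sup>+ \<xi>. ?F k \<xi> \<partial>P)"
    using F_measurable by (rule nn_integral_liminf)
  also have "\<dots> \<le> ?rhs"
    using F_le by (intro Liminf_le) simp_all
  finally show ?thesis .
qed

lemma ext_expect_nonneg:
  assumes "\<And>x. 0 \<le> g x"
  shows "ext_expect M g = enn2ereal (\<integral>\<^sup>+ x. e2ennreal (g x) \<partial>M)"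
  using assms by (simp add: ext_expect_def Let_def e2ennreal_neg zero_ennreal.rep_eq)

lemma ext_expect_nonpos:
  assumes "\<And>x. g x \<le> 0"
  shows "ext_expect M g = - enn2ereal (\<integral>\<^sup>+ x. e2ennreal (- g x) \<partial>M)"
  using assms by (simp add: ext_expect_def Let_def e2ennreal_neg zero_ennreal.rep_eq)

lemma nn_integral_neg_part_le_of_lower_tail:
  assumes "prob_space M" "g \<in> borel_measurable M" "0 \<le> K"
    and tail: "ereal z < ext_expect M (\<lambda>x. if g x \<le> - ereal K then g x else 0)"
  shows "(\<integral>\<^sup>+ x. e2ennreal (- g x) \<partial>M) \<le> ennreal (K - z)"
proof -
  interpret prob_space M by (fact assms(1))
  define t where "t x = (if g x \<le> - ereal K then g x else 0)" for x
  have "t x \<le> 0" for x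
    unfolding t_def using assms(3) by (auto intro: order_trans)
  then have expect_t: "ext_expect M t = - enn2ereal (\<integral>\<^sup>+ x. e2ennreal (- t x) \<partial>M)"
    by (rule ext_expect_nonpos)
  have tail_less: "enn2ereal (\<integral>\<^sup>+ x. e2ennreal (- t x) \<partial>M) < - ereal z"
    using tail unfolding t_def[symmetric] expect_t by (simp only: ereal_less_uminus_reorder)
  then have "0 < - z"
    using le_less_trans[OF enn2ereal_nonneg tail_less] by simp
  have tail_bound: "(\<integral>\<^sup>+ x. e2ennreal (- t x) \<partial>M) \<le> ennreal (- z)"
    using e2ennreal_mono[OF less_imp_le[OF tail_less]] by simp
  have "e2ennreal (- g x) \<le> ennreal K + e2ennreal (- t x)" for x
  proof (cases "g x \<le> - ereal K")
    case False
    then have "e2ennreal (- g x) \<le> e2ennreal (ereal K)"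
      by (intro e2ennreal_mono) (simp add: ereal_uminus_le_reorder)
    then show ?thesis
      by (simp add: add_increasing2)
  qed (simp add: t_def)
  then have "(\<integral>\<^sup>+ x. e2ennreal (- g x) \<partial>M) \<le> (\<integral>\<^sup>+ x. ennreal K + e2ennreal (- t x) \<partial>M)"
    by (intro nn_integral_mono)
  also have "\<dots> = ennreal K + (\<integral>\<^sup>+ x. e2ennreal (- t x) \<partial>M)"
    using assms(2) by (simp add: nn_integral_add emeasure_space_1 t_def)
  also have "\<dots> \<le> ennreal K + ennreal (- z)"
    using tail_bound by (rule add_left_mono)
  also have "\<dots> = ennreal (K - z)"
    using assms(3) \<open>0 < - z\<close> by (simp flip: ennreal_plus)
  finally show ?thesis .
qed

lemma eventually_nn_integral_neg_part_bounded:
  fixes g :: "nat \<Rightarrow> 'a \<Rightarrow> ereal"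
  assumes "\<And>\<nu>. prob_space (M \<nu>)" "\<And>\<nu>. g \<nu> \<in> borel_measurable (M \<nu>)"
    and "- \<infinity> < Liminf at_top (\<lambda>K::real. liminf (\<lambda>\<nu>.
           ext_expect (M \<nu>) (\<lambda>x. if g \<nu> x \<le> - ereal K then g \<nu> x else 0)))"
  shows "\<exists>B. \<forall>\<^sub>F \<nu> in sequentially. (\<integral>\<^sup>+ x. e2ennreal (- g \<nu> x) \<partial>M \<nu>) \<le> ennreal B"
proof -
  obtain z where "ereal z < Liminf at_top (\<lambda>K::real. liminf (\<lambda>\<nu>.
      ext_expect (M \<nu>) (\<lambda>x. if g \<nu> x \<le> - ereal K then g \<nu> x else 0)))"
    using ereal_dense2[OF assms(3)] by blast
  from less_LiminfD[OF this] obtain K0 where K0: "\<And>K. K0 \<le> K \<Longrightarrow> ereal z < liminf (\<lambda>\<nu>.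
      ext_expect (M \<nu>) (\<lambda>x. if g \<nu> x \<le> - ereal K then g \<nu> x else 0))"
    unfolding eventually_at_top_linorder by blast
  define K where "K = max K0 0"
  have "\<forall>\<^sub>F \<nu> in sequentially.
      ereal z < ext_expect (M \<nu>) (\<lambda>x. if g \<nu> x \<le> - ereal K then g \<nu> x else 0)"
    by (rule less_LiminfD, rule K0) (simp add: K_def)
  then have "\<forall>\<^sub>F \<nu> in sequentially. (\<integral>\<^sup>+ x. e2ennreal (- g \<nu> x) \<partial>M \<nu>) \<le> ennreal (K - z)"
    by (rule eventually_mono) (rule nn_integral_neg_part_le_of_lower_tail[OF assms(1,2)], simp_all add: K_def)
  then show ?thesis ..
qed

lemma nn_integral_pos_part_le_of_ext_expect_less:
  assumes "ext_expect M g < ereal c"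
    and neg_part: "(\<integral>\<^sup>+ x. e2ennreal (- g x) \<partial>M) \<le> ennreal b" "0 \<le> b"
  shows "(\<integral>\<^sup>+ x. e2ennreal (g x) \<partial>M) \<le> ennreal (c + b)"
proof -
  define rn where "rn = enn2real (\<integral>\<^sup>+ x. e2ennreal (- g x) \<partial>M)"
  have "(\<integral>\<^sup>+ x. e2ennreal (- g x) \<partial>M) \<noteq> \<top>"
    using neg_part(1) by (metis ennreal_neq_top neq_top_trans)
  then have rn: "(\<integral>\<^sup>+ x. e2ennreal (- g x) \<partial>M) = ennreal rn" "0 \<le> rn" "rn \<le> b"
    using neg_part unfolding rn_def by (simp_all add: ennreal_enn2real_if enn2real_leI)
  show ?thesis
  proof (cases "\<integral>\<^sup>+ x. e2ennreal (g x) \<partial>M")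
    case (real rp)
    then have "ereal rp - ereal rn < ereal c"
      using assms(1) rn(2) unfolding ext_expect_def Let_def rn(1) real by simp
    then show ?thesis
      using real rn by (simp add: ennreal_leI)
  next
    case top
    then show ?thesis
      using assms(1) unfolding ext_expect_def Let_def by simp
  qed
qed

lemma liminf_nn_integral_pos_part_neq_top:
  assumes "liminf (\<lambda>\<nu>. ext_expect (M \<nu>) (g \<nu>)) \<noteq> \<infinity>"
    and neg_part: "\<forall>\<^sub>F \<nu> in sequentially. (\<integral>\<^sup>+ x. e2ennreal (- g \<nu> x) \<partial>M \<nu>) \<le> ennreal B"
  shows "liminf (\<lambda>\<nu>. \<integral>\<^sup>+ x. e2ennreal (g \<nu> x) \<partial>M \<nu>) \<noteq> \<top>"
proof -
  obtain c :: nat where "liminf (\<lambda>\<nu>. ext_expect (M \<nu>) (g \<nu>)) < ereal c"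
    using assms(1) less_PInf_Ex_of_nat by blast
  then have "\<exists>\<^sub>F \<nu> in sequentially. ext_expect (M \<nu>) (g \<nu>) < ereal c"
    by (rule Liminf_lessD)
  from frequently_eventually_frequently[OF this neg_part]
  have "\<exists>\<^sub>F \<nu> in sequentially. (\<integral>\<^sup>+ x. e2ennreal (g \<nu> x) \<partial>M \<nu>) \<le> ennreal (c + max B 0)"
  proof (rule frequently_elim1, elim conjE)
    fix \<nu>
    assume expect_less: "ext_expect (M \<nu>) (g \<nu>) < ereal c"
      and "(\<integral>\<^sup>+ x. e2ennreal (- g \<nu> x) \<partial>M \<nu>) \<le> ennreal B"
    then have "(\<integral>\<^sup>+ x. e2ennreal (- g \<nu> x) \<partial>M \<nu>) \<le> ennreal (max B 0)"
      by (meson ennreal_leI max.cobounded1 order_trans)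
    with expect_less show "(\<integral>\<^sup>+ x. e2ennreal (g \<nu> x) \<partial>M \<nu>) \<le> ennreal (c + max B 0)"
      by (rule nn_integral_pos_part_le_of_ext_expect_less) simp
  qed
  then have "liminf (\<lambda>\<nu>. \<integral>\<^sup>+ x. e2ennreal (g \<nu> x) \<partial>M \<nu>) \<le> ennreal (c + max B 0)"
    by (rule frequently_le_imp_Liminf_le)
  then show ?thesis
    by (rule neq_top_trans[OF ennreal_neq_top])
qed

theorem lemma3p5:
  fixes Pn :: "nat \<Rightarrow> 'a::metric_space measure"
    and P :: "'a measure"
    and h :: "nat \<Rightarrow> 'a \<Rightarrow> ereal"
  assumes Pn_prob: "\<And>\<nu>. prob_space (Pn \<nu>)"
    and Pn_sets: "\<And>\<nu>. sets (Pn \<nu>) = sets borel"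
    and P_prob: "prob_space P"
    and P_sets: "sets P = sets borel"
    and weak: "weak_conv_metric Pn P"
    and h_meas: "\<And>\<nu>. h \<nu> \<in> borel_measurable borel"
    and UI: "Liminf at_top (\<lambda>K::real. liminf (\<lambda>\<nu>.
               ext_expect (Pn \<nu>) (\<lambda>\<xi>. if h \<nu> \<xi> \<le> - ereal K then h \<nu> \<xi> else 0))) = 0"
  shows "liminf (\<lambda>\<nu>. ext_expect (Pn \<nu>) (h \<nu>)) = \<infinity>
         \<or> ext_expect P (\<lambda>\<xi>. max (epi_liminf h \<xi>) 0) < \<infinity>"
proof (cases "liminf (\<lambda>\<nu>. ext_expect (Pn \<nu>) (h \<nu>)) = \<infinity>")
  case False
  have "h \<nu> \<in> borel_measurable (Pn \<nu>)" for \<nu>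
    unfolding measurable_cong_sets[OF Pn_sets refl] by (rule h_meas)
  then have "\<exists>B. \<forall>\<^sub>F \<nu> in sequentially. (\<integral>\<^sup>+ \<xi>. e2ennreal (- h \<nu> \<xi>) \<partial>Pn \<nu>) \<le> ennreal B"
    by (rule eventually_nn_integral_neg_part_bounded[OF Pn_prob]) (unfold UI, simp)
  then obtain B where
    "\<forall>\<^sub>F \<nu> in sequentially. (\<integral>\<^sup>+ \<xi>. e2ennreal (- h \<nu> \<xi>) \<partial>Pn \<nu>) \<le> ennreal B" ..
  with False have "liminf (\<lambda>\<nu>. \<integral>\<^sup>+ \<xi>. e2ennreal (h \<nu> \<xi>) \<partial>Pn \<nu>) \<noteq> \<top>"
    by (rule liminf_nn_integral_pos_part_neq_top)
  then have "(\<integral>\<^sup>+ \<xi>. e2ennreal (epi_liminf h \<xi>) \<partial>P) \<noteq> \<top>"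
    by (rule neq_top_trans) (rule nn_integral_epi_liminf_le_liminf[OF weak Pn_prob Pn_sets P_prob P_sets])
  then show ?thesis
    by (simp add: ext_expect_nonneg e2ennreal_max_0 less_top[symmetric])
qed simp

end
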